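(* Let $G=(V,E)$ be a finite simple graph which is $S_{1,1,5}$-free, $K_4$-free, diamond-free and butterfly-free. Let $xy\in E$ and let $r$ be a vertex with $rx\in E$ and $ry\notin E$. For $i\ge 1$ let $N_i=\{z\in V:\operatorname{dist}_G(z,\{x,y\})=i\}$. Assume $N_2=\{u_1,\dots,u_k\}$ is an independent set, and for each $i$ let $T_i$ be the set of vertices $t\in N_3$ whose only neighbor in $N_2$ is $u_i$. If $|N_2|\ge 5$, then there is no induced path $(u_i,t_i,z_1,z_2,z_3)$ with $t_i\in T_i$, $z_1\in N_4$, $z_2\in N_4\cup N_5$ and $z_3\in N_4\cup N_5\cup N_6$.
   Context: $S_{1,1,5}$ is the tree with a center $u$ adjacent to $a$, $b$ and $z_1$, where $u,z_1,\dots,z_5$ is an induced path, and no other edges. A diamond is $K_4$ minus one edge; a butterfly consists of two disjoint edges (inducing $2K_2$) together with a vertex adjacent to all four of their endpoints. $\operatorname{dist}_G(z,\{x,y\})$ is the minimum of the distances from $z$ to $x$ and to $y$. *)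

theory Defs
  imports Main
begin

definition simple_graph :: "'a set \<Rightarrow> ('a \<Rightarrow> 'a \<Rightarrow> bool) \<Rightarrow> bool" where
  "simple_graph V E \<longleftrightarrow> finite V \<and> (\<forall>a b. E a b \<longrightarrow> a \<in> V \<and> b \<in> V)
     \<and> (\<forall>a b. E a b \<longrightarrow> E b a) \<and> (\<forall>a. \<not> E a a)"

text \<open>Pattern graphs H on vertex set {0..<n}, given by an edge list (symmetrised).\<close>
definition pat :: "(nat \<times> nat) list \<Rightarrow> nat \<Rightarrow> nat \<Rightarrow> bool" where
  "pat es i j \<longleftrightarrow> (i, j) \<in> set es \<or> (j, i) \<in> set es"

definition contains_induced ::
  "'a set \<Rightarrow> ('a \<Rightarrow> 'a \<Rightarrow> bool) \<Rightarrow> nat \<Rightarrow> (nat \<Rightarrow> nat \<Rightarrow> bool) \<Rightarrow> bool" where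
  "contains_induced V E n H \<longleftrightarrow> (\<exists>f. inj_on f {..<n} \<and> f ` {..<n} \<subseteq> V \<and>
     (\<forall>i<n. \<forall>j<n. E (f i) (f j) \<longleftrightarrow> H i j))"

text \<open>S_{1,1,5}: centre 0 = u, leaves 1 = a, 2 = b, path u,3,4,5,6,7 = u,z1..z5.\<close>
definition S115 :: "nat \<Rightarrow> nat \<Rightarrow> bool" where
  "S115 = pat [(0,1),(0,2),(0,3),(3,4),(4,5),(5,6),(6,7)]"

definition K4 :: "nat \<Rightarrow> nat \<Rightarrow> bool" where
  "K4 = pat [(0,1),(0,2),(0,3),(1,2),(1,3),(2,3)]"

definition diamond :: "nat \<Rightarrow> nat \<Rightarrow> bool" where
  "diamond = pat [(0,1),(0,2),(0,3),(1,2),(1,3)]"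

definition butterfly :: "nat \<Rightarrow> nat \<Rightarrow> bool" where
  "butterfly = pat [(0,1),(2,3),(4,0),(4,1),(4,2),(4,3)]"

fun walk :: "'a set \<Rightarrow> ('a \<Rightarrow> 'a \<Rightarrow> bool) \<Rightarrow> nat \<Rightarrow> 'a \<Rightarrow> 'a \<Rightarrow> bool" where
  "walk V E 0 a b \<longleftrightarrow> a = b \<and> a \<in> V"
| "walk V E (Suc n) a b \<longleftrightarrow> (\<exists>c. E a c \<and> walk V E n c b)"

definition dist_set_eq :: "'a set \<Rightarrow> ('a \<Rightarrow> 'a \<Rightarrow> bool) \<Rightarrow> 'a \<Rightarrow> 'a set \<Rightarrow> nat \<Rightarrow> bool" where
  "dist_set_eq V E z S i \<longleftrightarrow> (\<exists>s\<in>S. walk V E i s z) \<and> (\<forall>j<i. \<forall>s\<in>S. \<not> walk V E j s z)"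

definition layer :: "'a set \<Rightarrow> ('a \<Rightarrow> 'a \<Rightarrow> bool) \<Rightarrow> 'a \<Rightarrow> 'a \<Rightarrow> nat \<Rightarrow> 'a set" where
  "layer V E x y i = {z \<in> V. dist_set_eq V E z {x, y} i}"

definition independent :: "('a \<Rightarrow> 'a \<Rightarrow> bool) \<Rightarrow> 'a set \<Rightarrow> bool" where
  "independent E S \<longleftrightarrow> (\<forall>a\<in>S. \<forall>b\<in>S. \<not> E a b)"

definition induced_path :: "'a set \<Rightarrow> ('a \<Rightarrow> 'a \<Rightarrow> bool) \<Rightarrow> 'a list \<Rightarrow> bool" where
  "induced_path V E ps \<longleftrightarrow> distinct ps \<and> set ps \<subseteq> V \<and>
     (\<forall>i<length ps. \<forall>j<length ps. E (ps ! i) (ps ! j) \<longleftrightarrow> (i = j + 1 \<or> j = i + 1))"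

end

theory Submission
  imports Defs
begin

text \<open>Suppose such a path exists and let \<open>w \<in> N\<^sub>1\<close> be a neighbour of \<open>u\<close>, say adjacent to \<open>x\<close>.
  No vertex of \<open>N\<^sub>0 \<union> N\<^sub>1 \<union> N\<^sub>2\<close> other than \<open>u\<close> sees \<open>t, z\<^sub>1, z\<^sub>2, z\<^sub>3\<close>, so every induced path
  inside \<open>N\<^sub>0 \<union> N\<^sub>1 \<union> {u}\<close> that ends in \<open>u\<close> continues along \<open>t, z\<^sub>1, z\<^sub>2, z\<^sub>3\<close>; two nonadjacent
  neighbours of its first vertex that miss the rest of it would complete an \<open>S\<^sub>1\<^sub>1\<^sub>5\<close>. Being free
  of \<open>K\<^sub>4\<close>, diamonds and butterflies, the graph has at most one edge in every neighbourhood,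
  which makes such pairs of neighbours easy to find. Consequently the neighbours of \<open>u\<close> in \<open>N\<^sub>1\<close>
  see no other vertex of \<open>N\<^sub>2\<close>, and every other vertex of \<open>N\<^sub>1\<close> sees at most one, so \<open>N\<^sub>2 - {u}\<close>
  has at least \<open>|N\<^sub>2| - 1\<close> distinct parents in \<open>N\<^sub>1\<close>. At most one of them is adjacent to \<open>x\<close>
  and at most two are not (those are adjacent to \<open>y\<close>), hence \<open>|N\<^sub>2| \<le> 4\<close>.\<close>

lemma layer_eq: "a \<in> layer V E x y i \<Longrightarrow> a \<in> layer V E x y j \<Longrightarrow> i = j"
  by (auto simp: layer_def dist_set_eq_def dest: linorder_neqE_nat)

lemma layer_0: "x \<in> V \<Longrightarrow> y \<in> V \<Longrightarrow> layer V E x y 0 = {x, y}"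
  by (auto simp: layer_def dist_set_eq_def)

lemma layer_swap: "layer V E y x = layer V E x y"
  unfolding layer_def dist_set_eq_def by (simp add: insert_commute)

locale graph =
  fixes V :: "'a set" and E :: "'a \<Rightarrow> 'a \<Rightarrow> bool"
  assumes graph: "simple_graph V E"
begin

lemma adj_sym: "E a b \<Longrightarrow> E b a"
  using graph by (simp add: simple_graph_def)

lemma adj_irrefl [simp]: "\<not> E a a"
  using graph by (simp add: simple_graph_def)

lemma adj_in_V: "E a b \<Longrightarrow> a \<in> V \<and> b \<in> V"
  using graph by (simp add: simple_graph_def)

lemma contains_induced_of_list:
  assumes "distinct vs" "set vs \<subseteq> V"
    and "\<forall>i<length vs. \<forall>j<length vs. E (vs ! i) (vs ! j) \<longleftrightarrow> H i j"
  shows "contains_induced V E (length vs) H"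
  unfolding contains_induced_def
proof (intro exI conjI)
  show "inj_on (nth vs) {..<length vs}"
    using assms(1) by (simp add: inj_on_nth)
  show "nth vs ` {..<length vs} \<subseteq> V"
    using assms(2) by auto
qed (use assms(3) in blast)

lemma adj_commute: "E a b \<longleftrightarrow> E b a"
  using adj_sym by blast

lemma induced_path_Cons:
  "induced_path V E (v # ps) \<longleftrightarrow>
     v \<in> V \<and> v \<notin> set ps \<and> (ps \<noteq> [] \<longrightarrow> E v (hd ps)) \<and> (\<forall>q\<in>set (tl ps). \<not> E v q)
     \<and> induced_path V E ps"
proof -
  have "(\<forall>j<length ps. E v (ps ! j) \<longleftrightarrow> j = 0) \<longleftrightarrow>
        (ps \<noteq> [] \<longrightarrow> E v (hd ps)) \<and> (\<forall>q\<in>set (tl ps). \<not> E v q)"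
    by (cases ps) (simp_all add: All_less_Suc2 all_set_conv_all_nth)
  moreover have "(\<forall>i<length ps. E (ps ! i) v \<longleftrightarrow> i = 0) \<longleftrightarrow> (\<forall>j<length ps. E v (ps ! j) \<longleftrightarrow> j = 0)"
    using adj_commute by blast
  ultimately show ?thesis
    unfolding induced_path_def by (simp add: All_less_Suc2) blast
qed

lemma induced_path_Nil [simp]: "induced_path V E []"
  by (simp add: induced_path_def)

lemma induced_path_append:
  assumes "induced_path V E (ps @ [u])" "induced_path V E (u # rs)"
    and "set ps \<inter> set rs = {}" "\<forall>p\<in>set ps. \<forall>r\<in>set rs. \<not> E p r"
  shows "induced_path V E (ps @ u # rs)"
  using assms
proof (induction ps)
  case (Cons p ps)
  have "hd (ps @ u # rs) = hd (ps @ [u])" "set (tl (ps @ u # rs)) = set (tl (ps @ [u])) \<union> set rs"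
    by (cases ps; simp)+
  with Cons show ?case
    unfolding append_Cons induced_path_Cons by auto
qed simp

lemma edge_in_unique_triangle:
  assumes K4: "\<not> contains_induced V E 4 K4" and diamond: "\<not> contains_induced V E 4 diamond"
    and "E v a" "E v b" "E a b" "E v d" "E a d"
  shows "b = d"
proof (rule ccontr)
  assume "b \<noteq> d"
  let ?vs = "[v, a, b, d]"
  have vs: "distinct ?vs" "set ?vs \<subseteq> V"
    using assms(3-) \<open>b \<noteq> d\<close> adj_in_V adj_irrefl by auto
  show False
  proof (cases "E b d")
    case True
    have "contains_induced V E (length ?vs) K4"
      using assms(3-) True adj_sym
      by (intro contains_induced_of_list vs)
         (simp add: K4_def pat_def All_less_Suc numeral_eq_Suc; blast)
    with K4 show False by (simp add: numeral_eq_Suc)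
  next
    case False
    have "contains_induced V E (length ?vs) diamond"
      using assms(3-) False adj_sym
      by (intro contains_induced_of_list vs)
         (simp add: diamond_def pat_def All_less_Suc numeral_eq_Suc; blast)
    with diamond show False by (simp add: numeral_eq_Suc)
  qed
qed

lemma neighbourhood_edge_unique:
  assumes K4: "\<not> contains_induced V E 4 K4" and diamond: "\<not> contains_induced V E 4 diamond"
    and butterfly: "\<not> contains_induced V E 5 butterfly"
    and ab: "E v a" "E v b" "E a b" and cd: "E v c" "E v d" "E c d"
  shows "{a, b} = {c, d}"
proof (rule ccontr)
  assume ne: "{a, b} \<noteq> {c, d}"
  note triangle = edge_in_unique_triangle[OF K4 diamond]
  have "a \<noteq> c" using triangle[of v a b d] ne ab cd by auto
  moreover have "a \<noteq> d" using triangle[of v a b c] ne ab cd adj_sym by auto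
  moreover have "b \<noteq> c" using triangle[of v b a d] ne ab cd adj_sym by auto
  moreover have "b \<noteq> d" using triangle[of v b a c] ne ab cd adj_sym by auto
  moreover have "\<not> E a c" using triangle[of v a b c] triangle[of v c a d] ne ab cd adj_sym by auto
  moreover have "\<not> E a d" using triangle[of v a b d] triangle[of v d a c] ne ab cd adj_sym by auto
  moreover have "\<not> E b c" using triangle[of v b a c] triangle[of v c b d] ne ab cd adj_sym by auto
  moreover have "\<not> E b d" using triangle[of v b a d] triangle[of v d b c] ne ab cd adj_sym by auto
  ultimately have apart: "a \<noteq> c" "a \<noteq> d" "b \<noteq> c" "b \<noteq> d" "\<not> E a c" "\<not> E a d" "\<not> E b c" "\<not> E b d"
    by auto
  let ?vs = "[a, b, c, d, v]"
  have vs: "distinct ?vs" "set ?vs \<subseteq> V"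
    using ab cd apart adj_in_V adj_irrefl by auto
  have "contains_induced V E (length ?vs) butterfly"
    using ab cd apart adj_sym
    by (intro contains_induced_of_list vs)
       (simp add: butterfly_def pat_def All_less_Suc numeral_eq_Suc; blast)
  with butterfly show False by (simp add: numeral_eq_Suc)
qed

lemma two_nonadjacent_neighbours:
  assumes K4: "\<not> contains_induced V E 4 K4" and diamond: "\<not> contains_induced V E 4 diamond"
    and butterfly: "\<not> contains_induced V E 5 butterfly"
    and v: "E v w" "E v b1" "E v b2" "E v b3" and d: "distinct [w, b1, b2, b3]"
  obtains l1 l2 where "l1 \<in> {b1, b2, b3}" "l2 \<in> {b1, b2, b3}" "l1 \<noteq> l2"
    "\<not> E l1 l2" "\<not> E l1 w" "\<not> E l2 w"
proof -
  have other_edge: "\<not> E p' q'" if "E p q" "E v p" "E v q" "E v p'" "E v q'" "p \<notin> {p', q'}"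
    for p q p' q'
    using that neighbourhood_edge_unique[OF K4 diamond butterfly, of v p q p' q'] by blast
  consider "E b1 w" | "E b2 w" | "E b3 w" | "\<not> E b1 w" "\<not> E b2 w" "\<not> E b3 w"
    by blast
  then show thesis
  proof cases
    case 1
    then have "\<not> E b2 b3" "\<not> E b2 w" "\<not> E b3 w"
      using other_edge[of b1 w b2 b3] other_edge[of b1 w b2 w] other_edge[of b1 w b3 w] v d by auto
    with d show thesis by (intro that[of b2 b3]) auto
  next
    case 2
    then have "\<not> E b1 b3" "\<not> E b1 w" "\<not> E b3 w"
      using other_edge[of b2 w b1 b3] other_edge[of b2 w b1 w] other_edge[of b2 w b3 w] v d by auto
    with d show thesis by (intro that[of b1 b3]) auto
  next
    case 3
    then have "\<not> E b1 b2" "\<not> E b1 w" "\<not> E b2 w"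
      using other_edge[of b3 w b1 b2] other_edge[of b3 w b1 w] other_edge[of b3 w b2 w] v d by auto
    with d show thesis by (intro that[of b1 b2]) auto
  next
    case 4
    have "\<not> E b1 b2 \<or> \<not> E b1 b3"
      using other_edge[of b2 b1 b1 b3] adj_sym[of b1 b2] v d by auto
    with 4 d show thesis
      using that[of b1 b2] that[of b1 b3] by auto
  qed
qed

lemma S115_free_no_forked_path:
  assumes S115: "\<not> contains_induced V E 8 S115"
    and path: "induced_path V E (c # ss)" "5 \<le> length ss"
    and leaves: "E c a" "E c b" "a \<noteq> b" "\<not> E a b" "\<forall>s\<in>set ss. \<not> E a s \<and> \<not> E b s"
  shows False
proof -
  obtain s1 s2 s3 s4 s5 rest where ss: "ss = s1 # s2 # s3 # s4 # s5 # rest"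
    using path(2) by (auto simp: numeral_eq_Suc Suc_le_length_iff)
  let ?vs = "[c, a, b, s1, s2, s3, s4, s5]"
  have facts: "E c s1" "E s1 s2" "E s2 s3" "E s3 s4" "E s4 s5"
    "\<not> E c s2" "\<not> E c s3" "\<not> E c s4" "\<not> E c s5" "\<not> E s1 s3" "\<not> E s1 s4" "\<not> E s1 s5"
    "\<not> E s2 s4" "\<not> E s2 s5" "\<not> E s3 s5" "distinct [c, s1, s2, s3, s4, s5]"
    using path(1) unfolding ss induced_path_Cons by auto
  have vs: "distinct ?vs" "set ?vs \<subseteq> V"
    using facts leaves adj_in_V adj_irrefl unfolding ss by auto
  have "contains_induced V E (length ?vs) S115"
    using facts leaves adj_sym unfolding ss
    by (intro contains_induced_of_list vs)
       (simp add: S115_def pat_def All_less_Suc numeral_eq_Suc; blast)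
  with S115 show False by (simp add: numeral_eq_Suc)
qed

lemma walk_snoc: "walk V E n a b \<Longrightarrow> E b c \<Longrightarrow> walk V E (Suc n) a c"
  by (induction n arbitrary: a) (auto dest: adj_in_V)

lemma walk_Suc_last: "walk V E (Suc n) a c \<Longrightarrow> \<exists>b. walk V E n a b \<and> E b c"
proof (induction n arbitrary: a)
  case 0
  then show ?case by (auto dest: adj_in_V)
next
  case (Suc n)
  then obtain d where "E a d" "walk V E (Suc n) d c" by auto
  moreover from this(2) obtain b where "walk V E n d b" "E b c"
    using Suc.IH by blast
  ultimately show ?case by auto
qed

lemma layer_adjacent_le:
  assumes "a \<in> layer V E x y i" "b \<in> layer V E x y j" "E a b"
  shows "j \<le> Suc i"
proof (rule ccontr)
  assume "\<not> j \<le> Suc i"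
  from assms(1) obtain s where "s \<in> {x, y}" "walk V E i s a"
    by (auto simp: layer_def dist_set_eq_def)
  moreover from this(2) have "walk V E (Suc i) s b"
    using assms(3) by (rule walk_snoc)
  moreover have "\<forall>k<j. \<forall>s\<in>{x, y}. \<not> walk V E k s b"
    using assms(2) by (simp add: layer_def dist_set_eq_def)
  moreover have "Suc i < j"
    using \<open>\<not> j \<le> Suc i\<close> by simp
  ultimately show False by blast
qed

lemma not_adjacent_far_layers:
  assumes "a \<in> layer V E x y i" "b \<in> layer V E x y j" "i + 2 \<le> j"
  shows "\<not> E a b \<and> \<not> E b a"
  using assms layer_adjacent_le adj_sym by fastforce

lemma layer_Suc_neighbour:
  assumes b: "b \<in> layer V E x y (Suc i)"
  obtains a where "a \<in> layer V E x y i" "E a b"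
proof -
  from b obtain s where s: "s \<in> {x, y}" "walk V E (Suc i) s b"
    by (auto simp: layer_def dist_set_eq_def)
  then obtain a where a: "walk V E i s a" "E a b"
    using walk_Suc_last by blast
  have "\<not> walk V E j s' a" if "j < i" "s' \<in> {x, y}" for j s'
    using b that walk_snoc[OF _ a(2), of j s'] by (auto simp: layer_def dist_set_eq_def)
  with a s have "a \<in> layer V E x y i"
    by (auto simp: layer_def dist_set_eq_def dest: adj_in_V)
  then show thesis using a(2) by (rule that)
qed

lemma layer_1_adjacent:
  assumes "x \<in> V" "y \<in> V" "a \<in> layer V E x y 1"
  shows "E x a \<or> E y a"
proof -
  from assms(3) have "a \<in> layer V E x y (Suc 0)"
    by simp
  then obtain c where "c \<in> layer V E x y 0" "E c a"
    by (rule layer_Suc_neighbour)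
  with assms(1,2) show ?thesis
    by (auto simp: layer_0)
qed

lemma finite_layer: "finite (layer V E x y i)"
  using graph finite_subset[of "layer V E x y i" V] by (auto simp: simple_graph_def layer_def)

end

locale outward_path = graph +
  fixes x y u t z1 z2 z3 w :: 'a
  assumes S115_free: "\<not> contains_induced V E 8 S115"
    and K4_free: "\<not> contains_induced V E 4 K4"
    and diamond_free: "\<not> contains_induced V E 4 diamond"
    and butterfly_free: "\<not> contains_induced V E 5 butterfly"
    and xy: "E x y"
    and N2_independent: "independent E (layer V E x y 2)"
    and u: "u \<in> layer V E x y 2"
    and t: "t \<in> layer V E x y 3" "{p \<in> layer V E x y 2. E t p} = {u}"
    and z: "z1 \<in> layer V E x y 4" "z2 \<in> layer V E x y 4 \<union> layer V E x y 5"
      "z3 \<in> layer V E x y 4 \<union> layer V E x y 5 \<union> layer V E x y 6"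
    and path: "induced_path V E [u, t, z1, z2, z3]"
    and w: "w \<in> layer V E x y 1" "E w u" "E x w"
begin

abbreviation N :: "nat \<Rightarrow> 'a set" where
  "N \<equiv> layer V E x y"

definition inner :: "'a set" where
  "inner = N 0 \<union> N 1 \<union> N 2"

lemma N0_eq: "N 0 = {x, y}"
  using adj_in_V[OF xy] by (simp add: layer_0)

lemma N1_adjacent_x_or_y: "a \<in> N 1 \<Longrightarrow> E x a \<or> E y a"
  using layer_1_adjacent adj_in_V[OF xy] by blast

lemma N2_has_N1_neighbour:
  assumes "p \<in> N 2"
  obtains a where "a \<in> N 1" "E a p"
proof -
  from assms have "p \<in> N (Suc 1)"
    by (simp add: numeral_2_eq_2)
  then show thesis
    using that by (rule layer_Suc_neighbour)
qed

lemma N0_N2_not_adjacent: "a \<in> N 0 \<Longrightarrow> p \<in> N 2 \<Longrightarrow> \<not> E a p \<and> \<not> E p a"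
  using not_adjacent_far_layers[of a x y 0 p 2] by simp

lemma N2_not_adjacent: "p \<in> N 2 \<Longrightarrow> q \<in> N 2 \<Longrightarrow> \<not> E p q"
  using N2_independent by (simp add: independent_def)

lemma layer_neq: "a \<in> N i \<Longrightarrow> b \<in> N j \<Longrightarrow> i \<noteq> j \<Longrightarrow> a \<noteq> b"
  using layer_eq by metis

lemma x_y_not_adjacent_u: "\<not> E x u" "\<not> E y u"
  using u N0_eq N0_N2_not_adjacent by auto

lemma N0_N1_in_inner: "q \<in> N 0 \<union> N 1 \<Longrightarrow> q \<in> inner - {u}"
  using u layer_neq[of q 0 u 2] layer_neq[of q 1 u 2] by (auto simp: inner_def)

lemma inner_layer:
  assumes "q \<in> inner"
  obtains i where "i \<le> 2" "q \<in> N i"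
  using assms that[of 0] that[of 1] that[of 2] unfolding inner_def by auto

lemma z_far_layer:
  assumes "r \<in> {z1, z2, z3}"
  obtains j where "4 \<le> j" "r \<in> N j"
proof -
  have "r \<in> N 4 \<or> r \<in> N 5 \<or> r \<in> N 6"
    using assms z by auto
  then show thesis
    using that[of 4] that[of 5] that[of 6] by auto
qed

lemma inner_not_adjacent_far:
  assumes "q \<in> inner" "r \<in> N j" "4 \<le> j"
  shows "\<not> E q r"
  using assms not_adjacent_far_layers[of q x y _ r j] by (elim inner_layer) simp

lemma inner_layer_neq:
  assumes "q \<in> inner" "r \<in> N j" "3 \<le> j"
  shows "q \<noteq> r"
  using assms layer_neq[of q _ r j] by (elim inner_layer) simp

lemma inner_not_adjacent_tail:
  assumes "q \<in> inner" "q \<noteq> u" "r \<in> {t, z1, z2, z3}"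
  shows "\<not> E q r"
proof (cases "r = t")
  case True
  show ?thesis
  proof (cases "q \<in> N 2")
    case True
    with t(2) assms(2) have "\<not> E t q"
      by blast
    then show ?thesis
      using \<open>r = t\<close> adj_sym by blast
  next
    case False
    with assms(1) have "q \<in> N 0 \<union> N 1"
      by (simp add: inner_def)
    then show ?thesis
      using t(1) \<open>r = t\<close> not_adjacent_far_layers[of q x y 0 t 3]
        not_adjacent_far_layers[of q x y 1 t 3] by auto
  qed
next
  case False
  with assms(3) have "r \<in> {z1, z2, z3}"
    by simp
  then obtain j where "4 \<le> j" "r \<in> N j"
    by (rule z_far_layer)
  then show ?thesis
    using inner_not_adjacent_far[OF assms(1)] by blast
qed

lemma inner_disjoint_tail:
  assumes "q \<in> inner"
  shows "q \<notin> {t, z1, z2, z3}"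
proof
  assume "q \<in> {t, z1, z2, z3}"
  moreover have "q \<noteq> t"
    using inner_layer_neq[OF assms t(1)] by simp
  ultimately have "q \<in> {z1, z2, z3}"
    by simp
  then obtain j where "4 \<le> j" "q \<in> N j"
    by (rule z_far_layer)
  then show False
    using inner_layer_neq[OF assms, of q j] by simp
qed

lemma induced_path_through_u:
  assumes "induced_path V E (ps @ [u])" "set ps \<subseteq> inner"
  shows "induced_path V E (ps @ [u, t, z1, z2, z3])"
proof (rule induced_path_append[OF assms(1) path])
  from assms(1) have "u \<notin> set ps"
    unfolding induced_path_def by simp
  then show "\<forall>p\<in>set ps. \<forall>r\<in>set [t, z1, z2, z3]. \<not> E p r"
    using assms(2) inner_not_adjacent_tail by (metis set_simps subsetD)
  show "set ps \<inter> set [t, z1, z2, z3] = {}"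
    using assms(2) inner_disjoint_tail by fastforce
qed

lemma no_fork_on_path_to_u:
  assumes "induced_path V E (c # qs @ [u])" "set (c # qs) \<subseteq> inner"
    and "l \<in> inner - {u}" "l' \<in> inner - {u}" "E c l" "E c l'" "l \<noteq> l'" "\<not> E l l'"
    and "\<forall>q\<in>set (qs @ [u]). \<not> E l q \<and> \<not> E l' q"
  shows False
proof (rule S115_free_no_forked_path[OF S115_free _ _ assms(5-8)])
  show "induced_path V E (c # qs @ [u, t, z1, z2, z3])"
    using induced_path_through_u[of "c # qs"] assms(1,2) by simp
  have "\<not> E l r \<and> \<not> E l' r" if "r \<in> {t, z1, z2, z3}" for r
    using assms(3,4) that inner_not_adjacent_tail by blast
  then show "\<forall>s\<in>set (qs @ [u, t, z1, z2, z3]). \<not> E l s \<and> \<not> E l' s"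
    using assms(9) by simp
qed simp

lemma no_three_neighbours_on_path_to_u:
  assumes path: "induced_path V E (c # q # qs @ [u])" "set (c # q # qs) \<subseteq> inner"
    and b: "E c b1" "E c b2" "E c b3" "distinct [q, b1, b2, b3]" "{b1, b2, b3} \<subseteq> inner - {u}"
    and far: "\<forall>b\<in>{b1, b2, b3}. \<forall>r\<in>set (qs @ [u]). \<not> E b r"
  shows False
proof -
  have "E c q"
    using path(1) by (simp add: induced_path_Cons)
  then obtain l l' where l: "l \<in> {b1, b2, b3}" "l' \<in> {b1, b2, b3}" "l \<noteq> l'" "\<not> E l l'"
    "\<not> E l q" "\<not> E l' q"
    using two_nonadjacent_neighbours[OF K4_free diamond_free butterfly_free _ b(1-4)] by blast
  show False
  proof (rule no_fork_on_path_to_u[of c "q # qs" l l'])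
    show "induced_path V E (c # (q # qs) @ [u])" "set (c # q # qs) \<subseteq> inner"
      using path by simp_all
    show "l \<in> inner - {u}" "l' \<in> inner - {u}" "E c l" "E c l'"
      using l(1,2) b by auto
    show "\<forall>r\<in>set ((q # qs) @ [u]). \<not> E l r \<and> \<not> E l' r"
      using l far by auto
  qed (use l in auto)
qed

lemma induced_path_via_w:
  assumes "a \<in> N 0 \<union> N 1" "E a w" "\<not> E a u"
  shows "induced_path V E [a, w, u]"
  using assms w(2) adj_in_V[OF w(2)] adj_in_V[OF assms(2)] N0_N1_in_inner[OF assms(1)]
  by (auto simp: induced_path_Cons)

lemma induced_path_y_x_w:
  assumes "\<not> E y w"
  shows "induced_path V E [y, x, w, u]"
  using assms xy adj_sym[OF xy] adj_in_V[OF xy] x_y_not_adjacent_u w(3) N0_eq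
    induced_path_via_w[of x] by (auto simp: induced_path_Cons)

lemma N2_neighbour_of_u_neighbour:
  assumes a: "a \<in> N 1" "E a u" and p: "p \<in> N 2" "E a p"
  shows "p = u"
proof (rule ccontr)
  assume "p \<noteq> u"
  obtain c where c: "c \<in> N 0" "E c a"
    using N1_adjacent_x_or_y[OF a(1)] N0_eq by auto
  show False
  proof (rule no_fork_on_path_to_u[of a "[]" c p])
    show "induced_path V E (a # [] @ [u])"
      using a adj_in_V[OF a(2)] by (auto simp: induced_path_Cons)
    show "c \<in> inner - {u}" "p \<in> inner - {u}"
      using c(1) p(1) \<open>p \<noteq> u\<close> N0_N1_in_inner by (auto simp: inner_def)
    show "c \<noteq> p" "\<not> E c p" "\<forall>q\<in>set ([] @ [u]). \<not> E c q \<and> \<not> E p q"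
      using c(1) p(1) u layer_neq[of c 0 p 2] N0_N2_not_adjacent N2_not_adjacent by auto
  qed (use a(1) adj_sym[OF c(2)] p(2) in \<open>auto simp: inner_def\<close>)
qed

lemma induced_path_from_N1_to_u:
  assumes a: "a \<in> N 1" "\<not> E a u"
  obtains qs where "induced_path V E (a # qs @ [u])" "set qs \<subseteq> {x, y, w}"
proof -
  have "a \<in> V" "a \<notin> {x, y, w, u}"
    using a w(2) u N0_eq layer_neq[of a 1 _ 0] layer_neq[of a 1 u 2] by (auto simp: layer_def)
  note a_facts = this a(2)
  have x_path: "induced_path V E [x, w, u]" and y_path: "E y w \<Longrightarrow> induced_path V E [y, w, u]"
    using induced_path_via_w[of x] induced_path_via_w[of y] N0_eq w(3) x_y_not_adjacent_u by auto
  consider "E a w" | "\<not> E a w" "E a x" | "\<not> E a w" "\<not> E a x" "E a y" "E y w"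
    | "\<not> E a w" "\<not> E a x" "E a y" "\<not> E y w"
    using N1_adjacent_x_or_y[OF a(1)] adj_sym by blast
  then show thesis
  proof cases
    case 1
    then have "induced_path V E (a # [w] @ [u])"
      using induced_path_via_w[of a] a by simp
    then show thesis
      by (rule that) simp
  next
    case 2
    then have "induced_path V E (a # [x, w] @ [u])"
      using x_path a_facts by (simp add: induced_path_Cons)
    then show thesis
      by (rule that) simp
  next
    case 3
    then have "induced_path V E (a # [y, w] @ [u])"
      using y_path a_facts by (simp add: induced_path_Cons)
    then show thesis
      by (rule that) simp
  next
    case 4
    then have "induced_path V E (a # [y, x, w] @ [u])"
      using induced_path_y_x_w a_facts by (simp add: induced_path_Cons)
    then show thesis
      by (rule that) simp
  qed
qed

lemma N2_neighbour_unique: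
  assumes a: "a \<in> N 1" "\<not> E a u" and pq: "p \<in> N 2" "q \<in> N 2" "E a p" "E a q"
  shows "p = q"
proof (rule ccontr)
  assume "p \<noteq> q"
  obtain qs where path_a: "induced_path V E (a # qs @ [u])" "set qs \<subseteq> {x, y, w}"
    using induced_path_from_N1_to_u[OF a] by blast
  have "p \<noteq> u" "q \<noteq> u"
    using a(2) pq(3,4) by auto
  then have "\<not> E w p" "\<not> E w q"
    using N2_neighbour_of_u_neighbour[OF w(1,2)] pq(1,2) by auto
  then have "\<not> E p w" "\<not> E q w"
    using adj_sym by blast+
  then have "\<forall>r\<in>{x, y, w, u}. \<not> E p r \<and> \<not> E q r"
    using pq(1,2) u N0_eq N0_N2_not_adjacent N2_not_adjacent by auto
  moreover have "set (a # qs) \<subseteq> inner"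
    using path_a(2) a(1) w(1) N0_eq by (auto simp: inner_def)
  ultimately show False
    using path_a pq \<open>p \<noteq> q\<close> \<open>p \<noteq> u\<close> \<open>q \<noteq> u\<close> N2_not_adjacent
    by (intro no_fork_on_path_to_u[OF path_a(1), of p q]) (auto simp: inner_def)
qed

lemma y_side_not_adjacent_w:
  assumes b: "b \<in> N 1" "\<not> E b u" "E y b" and yw: "\<not> E y w" and p: "p \<in> N 2" "E b p"
  shows "\<not> E b w"
proof
  assume "E b w"
  have "y \<in> N 0" "p \<noteq> u"
    using N0_eq b(2) p(2) by auto
  then have "\<not> E p w"
    using N2_neighbour_of_u_neighbour[OF w(1,2) p(1)] adj_sym by blast
  show False
  proof (rule no_fork_on_path_to_u[of b "[w]" y p])
    show "induced_path V E (b # [w] @ [u])"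
      using induced_path_via_w[of b] b \<open>E b w\<close> by simp
    show "set (b # [w]) \<subseteq> inner" "y \<in> inner - {u}" "p \<in> inner - {u}"
      using b(1) w(1) \<open>y \<in> N 0\<close> p(1) \<open>p \<noteq> u\<close> N0_N1_in_inner by (auto simp: inner_def)
    show "E b y" "y \<noteq> p" "\<not> E y p" "\<forall>r\<in>set ([w] @ [u]). \<not> E y r \<and> \<not> E p r"
      using adj_sym[OF b(3)] yw \<open>\<not> E p w\<close> \<open>y \<in> N 0\<close> p(1) u layer_neq[of y 0 p 2]
        N0_N2_not_adjacent N2_not_adjacent by auto
  qed (use p(2) in simp)
qed

definition parents :: "'a set" where
  "parents = {a \<in> N 1. \<exists>p \<in> N 2 - {u}. E a p}"

lemma finite_parents: "finite parents"
  using finite_layer[of x y 1] by (simp add: parents_def)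

lemma parent_not_adjacent_u: "a \<in> parents \<Longrightarrow> \<not> E a u"
  using N2_neighbour_of_u_neighbour unfolding parents_def by blast

lemma card_N2_le_Suc_card_parents: "card (N 2) \<le> Suc (card parents)"
proof -
  define f where "f p = (SOME a. a \<in> N 1 \<and> E a p)" for p
  have f: "f p \<in> N 1 \<and> E (f p) p" if "p \<in> N 2" for p
    unfolding f_def by (rule someI_ex) (meson N2_has_N1_neighbour that)
  have f_parent: "f p \<in> parents" if "p \<in> N 2 - {u}" for p
    using f that unfolding parents_def by blast
  have "inj_on f (N 2 - {u})"
  proof (rule inj_onI)
    fix p q
    assume "p \<in> N 2 - {u}" "q \<in> N 2 - {u}" "f p = f q"
    then show "p = q"
      using N2_neighbour_unique[of "f p" p q] f[of p] f[of q] parent_not_adjacent_u[OF f_parent] by auto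
  qed
  then have "card (N 2 - {u}) \<le> card parents"
    using f_parent finite_parents by (intro card_inj_on_le) auto
  then show ?thesis
    using u finite_layer[of x y 2] by (simp add: card_Diff_singleton)
qed

lemma x_side_parent_unique:
  assumes a: "a \<in> parents" "a' \<in> parents" "E x a" "E x a'"
  shows "a = a'"
proof (rule ccontr)
  assume "a \<noteq> a'"
  have N1: "a \<in> N 1" "a' \<in> N 1" and off_u: "\<not> E a u" "\<not> E a' u"
    using a(1,2) parent_not_adjacent_u by (auto simp: parents_def)
  have "x \<in> N 0" "y \<in> N 0"
    using N0_eq by auto
  show False
  proof (rule no_three_neighbours_on_path_to_u[of x w "[]" y a a'])
    show "induced_path V E (x # w # [] @ [u])"
      using induced_path_via_w[of x] \<open>x \<in> N 0\<close> w(3) x_y_not_adjacent_u by simp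
    show "set [x, w] \<subseteq> inner"
      using \<open>x \<in> N 0\<close> w(1) by (simp add: inner_def)
    show "distinct [w, y, a, a']"
      using \<open>a \<noteq> a'\<close> N1 off_u w \<open>y \<in> N 0\<close> layer_neq[of w 1 y 0] layer_neq[of y 0 _ 1] by auto
    show "{y, a, a'} \<subseteq> inner - {u}" "\<forall>b\<in>{y, a, a'}. \<forall>r\<in>set ([] @ [u]). \<not> E b r"
      using N1 off_u \<open>y \<in> N 0\<close> x_y_not_adjacent_u N0_N1_in_inner by auto
  qed (use xy a(3,4) in auto)
qed

lemma no_three_y_side_parents:
  assumes b: "{b1, b2, b3} \<subseteq> parents" "\<not> E x b1" "\<not> E x b2" "\<not> E x b3"
    and distinct: "distinct [b1, b2, b3]"
  shows False
proof -
  have N1: "{b1, b2, b3} \<subseteq> N 1" and off_u: "\<forall>b\<in>{b1, b2, b3}. \<not> E b u"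
    using b(1) parent_not_adjacent_u by (auto simp: parents_def)
  have yb: "E y b1" "E y b2" "E y b3"
    using N1 b(2-4) N1_adjacent_x_or_y by auto
  have "x \<in> N 0" "y \<in> N 0"
    using N0_eq by auto
  have "w \<notin> {b1, b2, b3}" "x \<notin> {b1, b2, b3}"
    using off_u w(2) \<open>x \<in> N 0\<close> N1 layer_neq[of x 0 _ 1] by auto
  have inner: "{b1, b2, b3} \<subseteq> inner - {u}"
    using N1 N0_N1_in_inner by auto
  show False
  proof (cases "E y w")
    case True
    show False
    proof (rule no_three_neighbours_on_path_to_u[of y w "[]", OF _ _ yb])
      show "induced_path V E (y # w # [] @ [u])"
        using induced_path_via_w[of y] \<open>y \<in> N 0\<close> True x_y_not_adjacent_u by simp
    qed (use \<open>y \<in> N 0\<close> w(1) \<open>w \<notin> {b1, b2, b3}\<close> distinct inner off_u in \<open>auto simp: inner_def\<close>)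
  next
    case False
    have nw: "\<not> E b w" if "b \<in> {b1, b2, b3}" for b
    proof -
      from that b(1) obtain p where "p \<in> N 2" "E b p"
        by (auto simp: parents_def)
      then show ?thesis
        using y_side_not_adjacent_w[of b p] that N1 off_u yb False by auto
    qed
    show False
    proof (rule no_three_neighbours_on_path_to_u[of y x "[w]", OF _ _ yb])
      show "induced_path V E (y # x # [w] @ [u])"
        using induced_path_y_x_w False by simp
    qed (use \<open>x \<in> N 0\<close> \<open>y \<in> N 0\<close> w(1) \<open>x \<notin> {b1, b2, b3}\<close> distinct inner off_u nw
         in \<open>auto simp: inner_def\<close>)
  qed
qed

lemma card_N2_le_4: "card (N 2) \<le> 4"
proof -
  let ?X = "{a \<in> parents. E x a}" and ?Y = "{a \<in> parents. \<not> E x a}"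
  have "card ?X \<le> 1"
    using finite_parents x_side_parent_unique by (simp add: card_le_Suc0_iff_eq)
  moreover have "card ?Y \<le> 2"
  proof (rule ccontr)
    assume "\<not> card ?Y \<le> 2"
    then obtain B where "B \<subseteq> ?Y" "card B = 3"
      using obtain_subset_with_card_n[of 3 ?Y] by auto
    then obtain b1 b2 b3 where "{b1, b2, b3} \<subseteq> ?Y" "distinct [b1, b2, b3]"
      by (auto simp: card_3_iff)
    then show False
      using no_three_y_side_parents[of b1 b2 b3] by auto
  qed
  moreover have "card parents = card ?X + card ?Y"
    using finite_parents by (subst card_Un_disjoint[symmetric]) (auto intro: arg_cong[where f = card])
  ultimately show ?thesis
    using card_N2_le_Suc_card_parents by linarith
qed

end

theorem lemma22:
  fixes V :: "'a set" and E :: "'a \<Rightarrow> 'a \<Rightarrow> bool" and x y r :: 'a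
  assumes "simple_graph V E"
    and "\<not> contains_induced V E 8 S115"
    and "\<not> contains_induced V E 4 K4"
    and "\<not> contains_induced V E 4 diamond"
    and "\<not> contains_induced V E 5 butterfly"
    and "E x y"
    and "r \<in> V" and "E r x" and "\<not> E r y"
    and "independent E (layer V E x y 2)"
    and "card (layer V E x y 2) \<ge> 5"
  shows "\<not> (\<exists>u t z1 z2 z3. u \<in> layer V E x y 2
              \<and> t \<in> layer V E x y 3 \<and> {w \<in> layer V E x y 2. E t w} = {u}
              \<and> z1 \<in> layer V E x y 4
              \<and> z2 \<in> layer V E x y 4 \<union> layer V E x y 5
              \<and> z3 \<in> layer V E x y 4 \<union> layer V E x y 5 \<union> layer V E x y 6
              \<and> induced_path V E [u, t, z1, z2, z3])"
proof (intro notI, elim exE conjE, goal_cases)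
  case (1 u t z1 z2 z3)
  note witness = this
  interpret graph V E
    by (rule graph.intro) (fact assms(1))
  have "u \<in> layer V E x y (Suc 1)"
    using witness(1) by (simp add: numeral_2_eq_2)
  then obtain w where w: "w \<in> layer V E x y 1" "E w u"
    by (rule layer_Suc_neighbour)
  have "E x w \<or> E y w"
    using layer_1_adjacent[OF _ _ w(1)] adj_in_V[OF assms(6)] by blast
  then show False
  proof
    assume "E x w"
    then interpret outward_path V E x y u t z1 z2 z3 w
      using assms witness w by unfold_locales auto
    show False
      using card_N2_le_4 assms(11) by simp
  next
    assume "E y w"
    then interpret outward_path V E y x u t z1 z2 z3 w
      using assms witness w adj_sym[OF assms(6)] by unfold_locales (auto simp: layer_swap)
    show False
      using card_N2_le_4 assms(11) by (simp add: layer_swap)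
  qed
qed

end
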